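(* For $i\in\mathbb{Z}_{>0}$ and $\epsilon>0$, the inclusion $\mathbb{CP}^n\times\mathbb{CP}^n\times\{i\pi+\epsilon\}\to Z_i$ is a homotopy equivalence.
   Context: $\mathbb{CP}^n$ has the Fubini–Study metric (Kähler form $\sum2\sqrt{-1}h_{ij}dz_i\wedge d\bar z_j$, $h_{ij}=\frac{(1+\sum_k|z_k|^2)\delta_{ij}-\bar z_iz_j}{(1+\sum_k|z_k|^2)^2}$), geodesic distance $\mathrm{dist}$, diameter $\pi$. For $x\in\mathbb{CP}^n$, $D_x=\{y\mid\mathrm{dist}(x,y)=\pi\}$. For $i>0$, $Z_i\subset\mathbb{CP}^n\times\mathbb{CP}^n\times\mathbb{R}$ is $\{(x,y,t)\mid\mathrm{dist}(x,y)<t-(i-1)\pi\}$ if $i$ is odd and $\{(x,y,t)\mid\mathrm{dist}(x,D_y)<t-(i-1)\pi\}$ if $i$ is even. *)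

theory Defs
  imports "HOL-Analysis.Analysis"
begin

text \<open>Model of CP^n: a point [u] (u a unit vector of C^(n+1), the index type 'n having
  n+1 elements) is represented by the rank-one orthogonal projection u u^*.\<close>

definition proj_of :: "complex^'n \<Rightarrow> complex^'n^'n" where
  "proj_of u = (\<chi> i j. u $ i * cnj (u $ j))"

definition CP :: "(complex^'n^'n) set" where
  "CP = {P. \<exists>u. norm u = 1 \<and> P = proj_of u}"

text \<open>Fubini-Study geodesic distance, normalised so that the diameter is pi:
  dist([u],[v]) = 2 arccos |<u,v>| for unit u, v; note trace (uu^* vv^*) = |<u,v>|^2.\<close>

definition fs_dist :: "complex^'n^'n \<Rightarrow> complex^'n^'n \<Rightarrow> real" where
  "fs_dist P Q = 2 * arccos (sqrt (Re (trace (P ** Q))))"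

definition Dset :: "complex^'n^'n \<Rightarrow> (complex^'n^'n) set" where
  "Dset x = {y \<in> CP. fs_dist x y = pi}"

definition fs_setdist :: "complex^'n^'n \<Rightarrow> (complex^'n^'n) set \<Rightarrow> real" where
  "fs_setdist x A = Inf (fs_dist x ` A)"

definition Zset :: "nat \<Rightarrow> ((complex^'n^'n) \<times> (complex^'n^'n) \<times> real) set" where
  "Zset i = {(x, y, t) | x y t. x \<in> CP \<and> y \<in> CP \<and>
      (if odd i then fs_dist x y < t - (real i - 1) * pi
       else fs_setdist x (Dset y) < t - (real i - 1) * pi)}"

definition homotopy_equivalence_map ::
  "'a topology \<Rightarrow> 'b topology \<Rightarrow> ('a \<Rightarrow> 'b) \<Rightarrow> bool" where
  "homotopy_equivalence_map X Y f \<longleftrightarrow> continuous_map X Y f \<and>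
     (\<exists>g. continuous_map Y X g \<and>
          homotopic_with (\<lambda>_. True) X X (g \<circ> f) id \<and>
          homotopic_with (\<lambda>_. True) Y Y (f \<circ> g) id)"

end

(* The Fubini-Study distance is at most pi, and D_y is nonempty (it contains any point
   orthogonal to y), so both dist(x, y) and dist(x, D_y) are at most pi.  Hence every fibre of
   Z_i over a point (x, y) of CP^n x CP^n is an open ray in t containing i pi + epsilon, and the
   straight-line homotopy in t deformation retracts Z_i onto the slice t = i pi + epsilon. *)

theory Submission
  imports Defs
begin

lemma homotopy_equivalence_map_inclusion_of_deformation_retract:
  assumes "A \<subseteq> topspace X"
    and "continuous_map X (subtopology X A) r"
    and "\<And>x. x \<in> A \<Longrightarrow> r x = x"
    and "homotopic_with (\<lambda>_. True) X X r id"
  shows "homotopy_equivalence_map (subtopology X A) X id"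
  unfolding homotopy_equivalence_map_def
proof (intro conjI exI)
  show "continuous_map (subtopology X A) X id"
    by (simp add: continuous_map_from_subtopology)
  show "continuous_map X (subtopology X A) r" by fact
  show "homotopic_with (\<lambda>_. True) (subtopology X A) (subtopology X A) (r \<circ> id) id"
    using assms(1,3) by (intro homotopic_with_id2) auto
  show "homotopic_with (\<lambda>_. True) X X (id \<circ> r) id"
    using assms(4) by simp
qed

lemma homotopy_equivalence_map_slice_inclusion:
  fixes S :: "'a::real_normed_vector set" and S' :: "'b::real_normed_vector set"
    and c :: "'a \<Rightarrow> 'b \<Rightarrow> real"
  assumes below: "\<And>x y. x \<in> S \<Longrightarrow> y \<in> S' \<Longrightarrow> c x y < T"
  shows "homotopy_equivalence_map (top_of_set (S \<times> S' \<times> {T}))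
           (top_of_set {(x, y, t). x \<in> S \<and> y \<in> S' \<and> c x y < t}) id"
proof -
  define Z where "Z = {(x, y, t). x \<in> S \<and> y \<in> S' \<and> c x y < t}"
  define r where "r = (\<lambda>(x::'a, y::'b, t::real). (x, y, T))"
  have slice_sub: "S \<times> S' \<times> {T} \<subseteq> Z"
    using below by (auto simp: Z_def)
  have retraction: "continuous_map (top_of_set Z) (top_of_set (S \<times> S' \<times> {T})) r"
    by (auto simp: r_def Z_def case_prod_unfold intro!: continuous_intros)
  have "closed_segment (r p) p \<subseteq> Z" if "p \<in> Z" for p
  proof
    fix q assume "q \<in> closed_segment (r p) p"
    moreover obtain x y t where "p = (x, y, t)" "x \<in> S" "y \<in> S'" "c x y < t"
      using \<open>p \<in> Z\<close> by (auto simp: Z_def)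
    moreover have "closed_segment T t \<subseteq> {c x y<..}"
      using below \<open>c x y < t\<close> \<open>x \<in> S\<close> \<open>y \<in> S'\<close> by (intro closed_segment_subset) auto
    ultimately show "q \<in> Z"
      by (auto simp: Z_def r_def closed_segment_def)
  qed
  then have deformation: "homotopic_with (\<lambda>_. True) (top_of_set Z) (top_of_set Z) r id"
    by (intro homotopic_with_linear) (auto simp: r_def case_prod_unfold intro!: continuous_intros)
  have "homotopy_equivalence_map (subtopology (top_of_set Z) (S \<times> S' \<times> {T})) (top_of_set Z) id"
    using slice_sub retraction deformation
    by (intro homotopy_equivalence_map_inclusion_of_deformation_retract)
       (auto simp: subtopology_subtopology Int_absorb1 r_def)
  then show ?thesis
    using slice_sub by (simp add: subtopology_subtopology Int_absorb1 Z_def)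
qed

definition herm_inner :: "complex^'n \<Rightarrow> complex^'n \<Rightarrow> complex" where
  "herm_inner u v = (\<Sum>j\<in>UNIV. cnj (u$j) * v$j)"

lemma Re_herm_inner: "Re (herm_inner u v) = inner u v"
  by (simp add: herm_inner_def inner_vec_def inner_complex_def)

lemma Im_herm_inner: "Im (herm_inner u v) = inner (\<chi> j. \<i> * u$j) v"
  by (simp add: herm_inner_def inner_vec_def inner_complex_def algebra_simps)

lemma norm_herm_inner_le:
  fixes u v :: "complex^'n"
  shows "cmod (herm_inner u v) \<le> norm u * norm v"
proof -
  define a :: "real^'n" where "a = (\<chi> j. cmod (u$j))"
  define b :: "real^'n" where "b = (\<chi> j. cmod (v$j))"
  have "cmod (herm_inner u v) \<le> (\<Sum>j\<in>UNIV. cmod (cnj (u$j) * v$j))"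
    unfolding herm_inner_def by (rule norm_sum)
  also have "\<dots> = inner a b"
    by (simp add: a_def b_def inner_vec_def norm_mult)
  also have "\<dots> \<le> norm a * norm b"
    by (rule norm_cauchy_schwarz)
  also have "\<dots> = norm u * norm v"
    by (simp add: a_def b_def norm_vec_def)
  finally show ?thesis .
qed

lemma herm_orthogonal_unit_exists:
  fixes u :: "complex^'n"
  assumes "CARD('n) \<ge> 2"
  obtains v where "norm v = 1" "herm_inner u v = 0"
proof -
  \<comment> \<open>Hermitian orthogonality to u is real orthogonality to u and i u, and the real
    dimension 2 CARD('n) exceeds 2.\<close>
  have "dim {u, \<chi> j. \<i> * u$j} \<le> card {u, \<chi> j. \<i> * u$j}"
    by (rule dim_le_card') simp
  also have "\<dots> < DIM(complex^'n)"
    using assms by (simp add: card_insert_if)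
  finally have "dim {u, \<chi> j. \<i> * u$j} < DIM(complex^'n)" .
  then obtain w where "w \<noteq> 0" and orth: "\<And>y. y \<in> span {u, \<chi> j. \<i> * u$j} \<Longrightarrow> orthogonal w y"
    by (rule orthogonal_to_subspace_exists) blast
  have "orthogonal w u" "orthogonal w (\<chi> j. \<i> * u$j)"
    by (simp_all add: orth span_base)
  then have "inner u w = 0" "inner (\<chi> j. \<i> * u$j) w = 0"
    by (simp_all add: orthogonal_def inner_commute)
  then have "herm_inner u w = 0"
    by (simp add: complex_eq_iff Re_herm_inner Im_herm_inner)
  moreover have "herm_inner u (w /\<^sub>R norm w) = herm_inner u w /\<^sub>R norm w"
    by (simp add: herm_inner_def scaleR_sum_right)
  ultimately have "herm_inner u (w /\<^sub>R norm w) = 0"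
    by simp
  with \<open>w \<noteq> 0\<close> show thesis
    by (intro that[of "w /\<^sub>R norm w"]) auto
qed

lemma trace_proj_of_mult:
  "trace (proj_of u ** proj_of v) = of_real ((cmod (herm_inner u v))\<^sup>2)"
proof -
  have "trace (proj_of u ** proj_of v)
      = (\<Sum>i\<in>UNIV. \<Sum>k\<in>UNIV. u$i * cnj (u$k) * (v$k * cnj (v$i)))"
    by (simp add: trace_def matrix_matrix_mult_def proj_of_def)
  also have "\<dots> = (\<Sum>k\<in>UNIV. \<Sum>i\<in>UNIV. (cnj (u$k) * v$k) * cnj (cnj (u$i) * v$i))"
    by (subst sum.swap) (simp add: algebra_simps)
  also have "\<dots> = herm_inner u v * cnj (herm_inner u v)"
    by (simp add: herm_inner_def sum_product)
  finally show ?thesis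
    by (simp only: complex_mult_cnj cmod_power2)
qed

lemma fs_dist_proj_of: "fs_dist (proj_of u) (proj_of v) = 2 * arccos (cmod (herm_inner u v))"
  by (simp add: fs_dist_def trace_proj_of_mult)

lemma fs_dist_CP_bounds:
  assumes "x \<in> CP" "y \<in> CP"
  shows "0 \<le> fs_dist x y" "fs_dist x y \<le> pi"
proof -
  obtain u v where "norm u = 1" "x = proj_of u" "norm v = 1" "y = proj_of v"
    using assms unfolding CP_def by auto
  moreover have "cmod (herm_inner u v) \<le> 1"
    using norm_herm_inner_le[of u v] \<open>norm u = 1\<close> \<open>norm v = 1\<close> by simp
  moreover have "-1 \<le> cmod (herm_inner u v)"
    by (rule order_trans[OF _ norm_ge_zero]) simp
  ultimately show "0 \<le> fs_dist x y" "fs_dist x y \<le> pi"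
    using arccos_lbound[of "cmod (herm_inner u v)"] arccos_le_pi2[of "cmod (herm_inner u v)"]
    by (simp_all add: fs_dist_proj_of)
qed

lemma Dset_nonempty:
  assumes "CARD('n) \<ge> 2" and "(y :: complex^'n^'n) \<in> CP"
  shows "Dset y \<noteq> {}"
proof -
  obtain u where "norm u = 1" "y = proj_of u"
    using assms(2) unfolding CP_def by auto
  moreover obtain v where "norm v = 1" "herm_inner u v = 0"
    using herm_orthogonal_unit_exists[OF assms(1)] .
  ultimately have "proj_of v \<in> Dset y"
    by (auto simp: Dset_def CP_def fs_dist_proj_of)
  then show ?thesis by blast
qed

lemma fs_setdist_le_pi:
  assumes "x \<in> CP" "A \<subseteq> CP" "A \<noteq> {}"
  shows "fs_setdist x A \<le> pi"
proof -
  obtain a where "a \<in> A"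
    using assms(3) by blast
  have "bdd_below (fs_dist x ` A)"
    using assms(1,2) fs_dist_CP_bounds(1) by (intro bdd_belowI[of _ 0]) blast
  then have "fs_setdist x A \<le> fs_dist x a"
    unfolding fs_setdist_def using \<open>a \<in> A\<close> by (simp add: cInf_lower)
  also have "\<dots> \<le> pi"
    using assms \<open>a \<in> A\<close> fs_dist_CP_bounds(2) by blast
  finally show ?thesis .
qed

theorem lemma4p2:
  fixes i :: nat and \<epsilon> :: real
  assumes "CARD('n) \<ge> 2"
    and "i > 0" and "\<epsilon> > 0"
  shows "homotopy_equivalence_map
           (top_of_set (CP \<times> CP \<times> {real i * pi + \<epsilon>}))
           (top_of_set (Zset i :: ((complex^'n^'n) \<times> (complex^'n^'n) \<times> real) set))
           id"
proof -
  define c :: "complex^'n^'n \<Rightarrow> complex^'n^'n \<Rightarrow> real" where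
    "c x y = (if odd i then fs_dist x y else fs_setdist x (Dset y)) + (real i - 1) * pi" for x y
  have "Zset i = {(x, y, t). x \<in> CP \<and> y \<in> CP \<and> c x y < t}"
    unfolding Zset_def c_def by (cases "odd i") auto
  moreover have "c x y < real i * pi + \<epsilon>" if "x \<in> CP" "y \<in> CP" for x y
  proof -
    have "fs_setdist x (Dset y) \<le> pi"
      using that Dset_nonempty[OF assms(1)] by (intro fs_setdist_le_pi) (auto simp: Dset_def)
    then show ?thesis
      using fs_dist_CP_bounds(2)[OF that] \<open>\<epsilon> > 0\<close> by (simp add: c_def algebra_simps)
  qed
  ultimately show ?thesis
    by (simp only:) (rule homotopy_equivalence_map_slice_inclusion)
qed

end
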